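(* Let $\beta\in(0,2)$, $v\in C([0,1],L(\mathbb{R}^d,\mathbb{R}^n))$ and $w\in\mathcal{C}^\beta(\mathbb{R}^d)$. Then the series $\pi_<(v,w):=\sum_{p=0}^\infty S_{p-1}v\,\Delta_pw$ converges uniformly, $\pi_<(v,w)\in\mathcal{C}^\beta(\mathbb{R}^n)$, and $\|\pi_<(v,w)\|_\beta\lesssim\|v\|_\infty\|w\|_\beta$.
   Context: Index set: pairs $(p,m)$ with either $p=-1,m=0$, or $p\in\mathbb{N}=\{0,1,2,\dots\}$ and $0\le m\le 2^p$. For $p\in\mathbb{N}$, $1\le m\le 2^p$ set $t^0_{pm}=(m-1)2^{-p}$, $t^1_{pm}=(2m-1)2^{-p-1}$, $t^2_{pm}=m2^{-p}$. Rescaled Haar functions: for $p\in\mathbb{N}$, $1\le m\le 2^p$, $\chi_{pm}=2^p$ on $[t^0_{pm},t^1_{pm})$, $=-2^p$ on $[t^1_{pm},t^2_{pm})$, $=0$ elsewhere; $\chi_{00}\equiv1$; $\chi_{p0}\equiv0$ for $p\ge1$. Rescaled Schauder functions: $\varphi_{pm}(t)=\int_0^t\chi_{pm}(s)\,ds$ for $p\in\mathbb{N}$, and $\varphi_{-10}\equiv1$. For continuous $f:[0,1]\to E$ ($E$ a finite-dimensional normed space), coefficients: $f_{-10}=f(0)$, $f_{00}=f(1)-f(0)$, $f_{p0}=0$ for $p\ge1$, $f_{pm}=2f(t^1_{pm})-f(t^0_{pm})-f(t^2_{pm})$ for $p\in\mathbb{N},m\ge1$. Schauder blocks: $\Delta_pf=\sum_{m=0}^{2^p}f_{pm}\varphi_{pm}$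 ($p\ge-1$), $S_pf=\sum_{q=-1}^p\Delta_qf$ (so $S_{-1}f\equiv f(0)$ and $S_pf$ is the piecewise linear interpolation of $f$ at the points $k2^{-p-1}$). For $\alpha>0$, $\|f\|_\alpha:=\sup_{p,m}2^{p\alpha}|f_{pm}|$ and $\mathcal{C}^\alpha(E):=\{f\in C([0,1],E):\|f\|_\alpha<\infty\}$. $\|\cdot\|_\infty$ is the sup norm; $\lesssim$ hides a constant independent of the functions. *)

theory Defs
  imports "HOL-Analysis.Analysis"
begin

text \<open>Dyadic points, indexed by p \<in> nat and 1 \<le> m \<le> 2^p.\<close>
definition tt0 :: "nat \<Rightarrow> nat \<Rightarrow> real" where
  "tt0 p m = (real m - 1) / 2 ^ p"
definition tt1 :: "nat \<Rightarrow> nat \<Rightarrow> real" where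
  "tt1 p m = (2 * real m - 1) / 2 ^ (p + 1)"
definition tt2 :: "nat \<Rightarrow> nat \<Rightarrow> real" where
  "tt2 p m = real m / 2 ^ p"

definition haar :: "nat \<Rightarrow> nat \<Rightarrow> real \<Rightarrow> real" where
  "haar p m t =
     (if p = 0 \<and> m = 0 then 1
      else if 1 \<le> m \<and> m \<le> 2 ^ p then
        (if tt0 p m \<le> t \<and> t < tt1 p m then 2 ^ p
         else if tt1 p m \<le> t \<and> t < tt2 p m then - (2 ^ p) else 0)
      else 0)"

definition schauder :: "int \<Rightarrow> nat \<Rightarrow> real \<Rightarrow> real" where
  "schauder p m t = (if p = -1 then 1 else integral {0..t} (haar (nat p) m))"

definition schauder_idx :: "(int \<times> nat) set" where
  "schauder_idx = {(-1, 0)} \<union> {(int p, m) | p m. m \<le> 2 ^ p}"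

definition scoef :: "(real \<Rightarrow> 'a::real_normed_vector) \<Rightarrow> int \<Rightarrow> nat \<Rightarrow> 'a" where
  "scoef f p m =
     (if p = -1 \<and> m = 0 then f 0
      else if p = 0 \<and> m = 0 then f 1 - f 0
      else if 0 \<le> p \<and> 1 \<le> m \<and> m \<le> 2 ^ nat p then
        2 *\<^sub>R f (tt1 (nat p) m) - f (tt0 (nat p) m) - f (tt2 (nat p) m)
      else 0)"

definition sDelta :: "(real \<Rightarrow> 'a::real_normed_vector) \<Rightarrow> int \<Rightarrow> real \<Rightarrow> 'a" where
  "sDelta f p t = (\<Sum>m\<in>{0..2 ^ nat p}. schauder p m t *\<^sub>R scoef f p m)"

definition sS :: "(real \<Rightarrow> 'a::real_normed_vector) \<Rightarrow> int \<Rightarrow> real \<Rightarrow> 'a" where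
  "sS f p t = (\<Sum>q\<in>{-1..p}. sDelta f q t)"

definition holder_norm :: "real \<Rightarrow> (real \<Rightarrow> 'a::real_normed_vector) \<Rightarrow> real" where
  "holder_norm \<alpha> f = (SUP pm\<in>schauder_idx. 2 powr (real_of_int (fst pm) * \<alpha>) * norm (scoef f (fst pm) (snd pm)))"

definition holder_space :: "real \<Rightarrow> (real \<Rightarrow> 'a::real_normed_vector) set" where
  "holder_space \<alpha> = {f. continuous_on {0..1} f \<and>
     bdd_above ((\<lambda>pm. 2 powr (real_of_int (fst pm) * \<alpha>) * norm (scoef f (fst pm) (snd pm))) ` schauder_idx)}"

definition sup_norm :: "(real \<Rightarrow> 'a::real_normed_vector) \<Rightarrow> real" where
  "sup_norm f = (SUP t\<in>{0..1}. norm (f t))"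

definition para_term :: "(real \<Rightarrow> ('a::real_normed_vector \<Rightarrow>\<^sub>L 'b::real_normed_vector)) \<Rightarrow> (real \<Rightarrow> 'a) \<Rightarrow> nat \<Rightarrow> real \<Rightarrow> 'b" where
  "para_term v w p t = blinfun_apply (sS v (int p - 1) t) (sDelta w (int p) t)"

definition para :: "(real \<Rightarrow> ('a::real_normed_vector \<Rightarrow>\<^sub>L 'b::real_normed_vector)) \<Rightarrow> (real \<Rightarrow> 'a) \<Rightarrow> real \<Rightarrow> 'b" where
  "para v w t = (\<Sum>p. para_term v w p t)"

end

theory Submission
  imports Defs
begin

text \<open>
  Writing b = 2^beta, the hypotheses say |v| <= V on [0,1] and that the level-q coefficients
  of w are at most W b^(-q).  The proof rests on the explicit shape of the Schauder system:
  on the grid of level q the Schauder functions are rescaled hat functions, so a block Delta_q f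
  is affine, bounded by 2 max_m |f_{qm}|, and Lipschitz with constant 2^(q+1) max_m |f_{qm}| on
  each cell of level q, while the partial sum S_p f interpolates f on the grid of level p+1.

  (1) Uniform convergence: |S_{p-1} v| <= V + 8pV and |Delta_p w| <= 2 W b^(-p), so the
      Weierstrass M-test applies; the limit is continuous.
  (2) Coefficients: the (j,m) coefficient of pi_< is the sum over p <= j of the second
      differences of the terms (blocks of level p > j vanish on the grid of level j).  For p < j
      both factors are affine on the interval (j,m), so only the product of their slopes
      contributes, which is O(4^(p-j) b^(-p)); for p = j the term is S_{j-1} v at the centre,
      bounded by V, applied to w_{jm}.  Summing the geometric series (b < 4) gives the decay
      b^(-j) of the coefficients, i.e. the C^beta bound.
\<close>
section \<open>Hat functions\<close>

text \<open>The tent of height 1 and half-width 1 centred at a.  On the dyadic grid of level q the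
  Schauder function with index (q,m) is a rescaled hat centred at the odd integer 2m-1.\<close>
definition hat :: "real \<Rightarrow> real \<Rightarrow> real" where
  "hat a s = max 0 (1 - \<bar>s - a\<bar>)"

lemma hat_on_cell:
  fixes a k :: int and x :: real
  assumes "of_int k \<le> x" "x \<le> of_int k + 1"
  shows "hat (of_int a) x = (if a = k then 1 - (x - a) else if a = k + 1 then 1 - (a - x) else 0)"
proof -
  consider "a \<le> k - 1" | "a = k" | "a = k + 1" | "a \<ge> k + 2" by linarith
  then show ?thesis
  proof cases
    case 1
    then have "real_of_int a \<le> of_int k - 1" by linarith
    then show ?thesis using assms 1 by (auto simp: hat_def)
  next
    case 4
    then have "real_of_int a \<ge> of_int k + 2" by linarith
    then show ?thesis using assms 4 by (auto simp: hat_def)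
  qed (use assms in \<open>auto simp: hat_def\<close>)
qed

lemma hat_midpoint_on_cell:
  fixes a k :: int
  assumes "of_int k \<le> x" "x \<le> of_int k + 1" "of_int k \<le> z" "z \<le> of_int k + 1"
  shows "hat (of_int a) x + hat (of_int a) z = 2 * hat (of_int a) ((x + z) / 2)"
proof -
  have "of_int k \<le> (x + z) / 2" "(x + z) / 2 \<le> of_int k + 1" using assms by auto
  then show ?thesis using hat_on_cell[OF assms(1,2), of a] hat_on_cell[OF assms(3,4), of a]
     hat_on_cell[of k "(x + z) / 2" a] by (auto simp: field_simps)
qed

lemma hat_lipschitz_on_cell:
  fixes a k :: int
  assumes "of_int k \<le> x" "x \<le> of_int k + 1" "of_int k \<le> z" "z \<le> of_int k + 1"
  shows "\<bar>hat (of_int a) x - hat (of_int a) z\<bar> \<le> (if a = k \<or> a = k + 1 then \<bar>x - z\<bar> else 0)"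
  using hat_on_cell[OF assms(1,2), of a] hat_on_cell[OF assms(3,4), of a] by auto

lemma hat_bounded_on_cell:
  fixes a k :: int
  assumes "of_int k \<le> x" "x \<le> of_int k + 1"
  shows "\<bar>hat (of_int a) x\<bar> \<le> (if a = k \<or> a = k + 1 then 1 else 0)"
  using hat_on_cell[OF assms, of a] assms by auto

lemma hat_at_int: "hat (of_int a) (of_int k) = (if a = k then 1 else 0)"
  using hat_on_cell[of k "of_int k" a] by auto

section \<open>Schauder functions as hats\<close>

lemma affine_near_has_vector_derivative:
  assumes "open S" "x \<in> S" "\<And>z. z \<in> S \<Longrightarrow> f z = c * z + d"
  shows "(f has_vector_derivative c) (at x)"
proof -
  have "((\<lambda>z. c * z + d) has_field_derivative c) (at x)"
    by (auto intro!: derivative_eq_intros)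
  then have "(f has_field_derivative c) (at x)"
    by (rule has_field_derivative_transform_within_open[OF _ assms(1,2)]) (simp add: assms(3))
  then show ?thesis by (simp add: has_real_derivative_iff_has_vector_derivative)
qed

lemma rescaled_hat_derivative:
  assumes m: "1 \<le> m" "m \<le> 2 ^ q" and x: "x \<notin> {tt0 q m, tt1 q m, tt2 q m}"
  shows "((\<lambda>z. hat (2 * real m - 1) (2 ^ (q + 1) * z) / 2) has_vector_derivative haar q m x) (at x)"
proof -
  define P :: real where "P = 2 ^ q"
  have P: "P > 0" by (simp add: P_def)
  have tt: "tt0 q m = (real m - 1) / P" "tt1 q m = (real m - 1/2) / P" "tt2 q m = real m / P"
    by (auto simp: tt0_def tt1_def tt2_def P_def field_simps)
  have lt: "(a / P < y) \<longleftrightarrow> a < P * y" "(y < a / P) \<longleftrightarrow> P * y < a" for a y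
    using P by (auto simp: field_simps)
  have haar: "haar q m x = (if real m - 1 < P * x \<and> P * x < real m - 1/2 then P
      else if real m - 1/2 < P * x \<and> P * x < real m then - P else 0)"
    using m x P by (auto simp: haar_def P_def tt field_simps)
  have "P * x \<noteq> real m - 1" "P * x \<noteq> real m - 1/2" "P * x \<noteq> real m"
    using x P by (auto simp: tt field_simps)
  then consider "P * x < real m - 1" | "real m - 1 < P * x \<and> P * x < real m - 1/2"
    | "real m - 1/2 < P * x \<and> P * x < real m" | "real m < P * x"
    by linarith
  then show ?thesis
  proof cases
    case 1
    show ?thesis
      by (rule affine_near_has_vector_derivative[of "{..<tt0 q m}" _ _ _ 0])
         (use 1 in \<open>auto simp: tt lt haar hat_def P_def[symmetric]\<close>)
  next
    case 2
    show ?thesis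
      by (rule affine_near_has_vector_derivative[of "{tt0 q m<..<tt1 q m}" _ _ _ "1 - real m"])
         (use 2 in \<open>auto simp: tt lt haar hat_def P_def[symmetric]\<close>)
  next
    case 3
    show ?thesis
      by (rule affine_near_has_vector_derivative[of "{tt1 q m<..<tt2 q m}" _ _ _ "real m"])
         (use 3 in \<open>auto simp: tt lt haar hat_def P_def[symmetric]\<close>)
  next
    case 4
    show ?thesis
      by (rule affine_near_has_vector_derivative[of "{tt2 q m<..}" _ _ _ 0])
         (use 4 in \<open>auto simp: tt lt haar hat_def P_def[symmetric]\<close>)
  qed
qed

lemma schauder_eq_hat:
  assumes m: "1 \<le> m" "m \<le> 2 ^ q" and t: "0 \<le> t"
  shows "schauder (int q) m t = hat (2 * real m - 1) (2 ^ (q + 1) * t) / 2"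
proof -
  define H where "H = (\<lambda>z. hat (2 * real m - 1) (2 ^ (q + 1) * z) / 2)"
  have "H 0 = 0" using m by (simp add: H_def hat_def)
  moreover have "continuous_on {0..t} H" unfolding H_def hat_def by (intro continuous_intros) auto
  ultimately have "(haar q m has_integral H t) {0..t}"
    using fundamental_theorem_of_calculus_strong[of "{tt0 q m, tt1 q m, tt2 q m}" 0 t H "haar q m"]
      rescaled_hat_derivative[OF m] t unfolding H_def by auto
  then show ?thesis by (simp add: schauder_def H_def integral_unique)
qed

lemma schauder_0_0:
  assumes "0 \<le> t" shows "schauder 0 0 t = t"
proof -
  have "haar 0 0 = (\<lambda>_. 1)" by (auto simp: haar_def)
  then show ?thesis using assms by (simp add: schauder_def)
qed

lemma schauder_index_0:
  assumes "q > 0" shows "schauder (int q) 0 t = 0"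
proof -
  have "haar q 0 = (\<lambda>_. 0)" using assms by (auto simp: haar_def)
  then show ?thesis by (simp add: schauder_def)
qed

lemma schauder_beyond:
  assumes "2 ^ q < m" shows "schauder (int q) m t = 0"
proof -
  have "haar q m = (\<lambda>_. 0)" using assms by (auto simp: haar_def)
  then show ?thesis by (simp add: schauder_def)
qed

text \<open>The level-q part of a Schauder block, written in the rescaled variable s = 2^(q+1) t:
  a sum of hats centred at the odd integers, weighted by the coefficients of level q.\<close>
definition level_sum :: "(real \<Rightarrow> 'a::real_normed_vector) \<Rightarrow> nat \<Rightarrow> real \<Rightarrow> 'a" where
  "level_sum f q s = (\<Sum>m\<in>{1..2 ^ q}. hat (2 * real m - 1) s *\<^sub>R scoef f (int q) m)"

lemma odd_as_int: "2 * real m - 1 = real_of_int (2 * int m - 1)"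
  by simp

text \<open>A unit cell [k,k+1] contains at most one odd integer among its endpoints, so at most one
  hat of level q is active on it.\<close>
lemma sum_adjacent_odd_le:
  fixes c :: real and k :: int
  assumes "c \<ge> 0"
  shows "(\<Sum>m\<in>{1..(2::nat) ^ q}. if 2 * int m - 1 = k \<or> 2 * int m - 1 = k + 1 then c else 0) \<le> c"
proof -
  have "(\<Sum>m\<in>{1..(2::nat) ^ q}. if 2 * int m - 1 = k \<or> 2 * int m - 1 = k + 1 then c else 0)
      \<le> (\<Sum>m\<in>{1..(2::nat) ^ q}. if m = nat (k div 2) + 1 then c else 0)"
  proof (rule sum_mono)
    fix m :: nat assume m: "m \<in> {1..2 ^ q}"
    have "2 * int m - 1 = k \<or> 2 * int m - 1 = k + 1 \<Longrightarrow> int m = k div 2 + 1"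
      by presburger
    with m have "2 * int m - 1 = k \<or> 2 * int m - 1 = k + 1 \<Longrightarrow> m = nat (k div 2) + 1"
      by auto
    then show "(if 2 * int m - 1 = k \<or> 2 * int m - 1 = k + 1 then c else 0)
        \<le> (if m = nat (k div 2) + 1 then c else 0)"
      using assms by (cases "2 * int m - 1 = k \<or> 2 * int m - 1 = k + 1") simp_all
  qed
  also have "\<dots> \<le> c" using assms by (simp add: sum.delta)
  finally show ?thesis .
qed

lemma level_sum_midpoint:
  fixes k :: int
  assumes "of_int k \<le> x" "x \<le> of_int k + 1" "of_int k \<le> z" "z \<le> of_int k + 1"
  shows "level_sum f q x + level_sum f q z = 2 *\<^sub>R level_sum f q ((x + z) / 2)"
proof -
  have "level_sum f q x + level_sum f q z
      = (\<Sum>m\<in>{1..2 ^ q}. (hat (2 * real m - 1) x + hat (2 * real m - 1) z) *\<^sub>R scoef f (int q) m)"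
    by (simp add: level_sum_def sum.distrib scaleR_left_distrib)
  also have "\<dots> = (\<Sum>m\<in>{1..2 ^ q}. (2 * hat (2 * real m - 1) ((x + z) / 2)) *\<^sub>R scoef f (int q) m)"
    by (simp only: odd_as_int hat_midpoint_on_cell[OF assms])
  also have "\<dots> = 2 *\<^sub>R level_sum f q ((x + z) / 2)"
    by (simp add: level_sum_def scaleR_sum_right)
  finally show ?thesis .
qed

lemma level_sum_lipschitz:
  fixes k :: int
  assumes "of_int k \<le> x" "x \<le> of_int k + 1" "of_int k \<le> z" "z \<le> of_int k + 1"
    and K: "\<And>m. 1 \<le> m \<Longrightarrow> m \<le> 2 ^ q \<Longrightarrow> norm (scoef f (int q) m) \<le> K"
  shows "norm (level_sum f q x - level_sum f q z) \<le> \<bar>x - z\<bar> * K"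
proof -
  have K0: "K \<ge> 0" using order_trans[OF norm_ge_zero K[of 1]] by simp
  have eq: "level_sum f q x - level_sum f q z
      = (\<Sum>m\<in>{1..2 ^ q}. (hat (2 * real m - 1) x - hat (2 * real m - 1) z) *\<^sub>R scoef f (int q) m)"
    by (simp add: level_sum_def sum_subtractf scaleR_diff_left)
  have "norm (level_sum f q x - level_sum f q z)
      \<le> (\<Sum>m\<in>{1..2 ^ q}. \<bar>hat (2 * real m - 1) x - hat (2 * real m - 1) z\<bar> * norm (scoef f (int q) m))"
    unfolding eq by (rule order_trans[OF norm_sum]) simp
  also have "\<dots> \<le> (\<Sum>m\<in>{1..(2::nat) ^ q}.
      if 2 * int m - 1 = k \<or> 2 * int m - 1 = k + 1 then \<bar>x - z\<bar> * K else 0)"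
  proof (rule sum_mono)
    fix m assume "m \<in> {1..(2::nat) ^ q}"
    then have Km: "norm (scoef f (int q) m) \<le> K" using K by auto
    have "\<bar>hat (2 * real m - 1) x - hat (2 * real m - 1) z\<bar>
        \<le> (if 2 * int m - 1 = k \<or> 2 * int m - 1 = k + 1 then \<bar>x - z\<bar> else 0)"
      unfolding odd_as_int by (rule hat_lipschitz_on_cell[OF assms(1-4)])
    from mult_mono[OF this Km _ norm_ge_zero]
    show "\<bar>hat (2 * real m - 1) x - hat (2 * real m - 1) z\<bar> * norm (scoef f (int q) m)
        \<le> (if 2 * int m - 1 = k \<or> 2 * int m - 1 = k + 1 then \<bar>x - z\<bar> * K else 0)"
      using K0 by (auto split: if_splits)
  qed
  also have "\<dots> \<le> \<bar>x - z\<bar> * K" by (rule sum_adjacent_odd_le) (use K0 in simp)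
  finally show ?thesis .
qed

lemma level_sum_bounded:
  fixes k :: int
  assumes "of_int k \<le> x" "x \<le> of_int k + 1"
    and K: "\<And>m. 1 \<le> m \<Longrightarrow> m \<le> 2 ^ q \<Longrightarrow> norm (scoef f (int q) m) \<le> K"
  shows "norm (level_sum f q x) \<le> K"
proof -
  have K0: "K \<ge> 0" using order_trans[OF norm_ge_zero K[of 1]] by simp
  have "norm (level_sum f q x) \<le> (\<Sum>m\<in>{1..2 ^ q}. \<bar>hat (2 * real m - 1) x\<bar> * norm (scoef f (int q) m))"
    unfolding level_sum_def by (rule order_trans[OF norm_sum]) simp
  also have "\<dots> \<le> (\<Sum>m\<in>{1..(2::nat) ^ q}. if 2 * int m - 1 = k \<or> 2 * int m - 1 = k + 1 then K else 0)"
  proof (rule sum_mono)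
    fix m assume "m \<in> {1..(2::nat) ^ q}"
    then have Km: "norm (scoef f (int q) m) \<le> K" using K by auto
    have "\<bar>hat (2 * real m - 1) x\<bar> \<le> (if 2 * int m - 1 = k \<or> 2 * int m - 1 = k + 1 then 1 else 0)"
      unfolding odd_as_int by (rule hat_bounded_on_cell[OF assms(1,2)])
    from mult_mono[OF this Km _ norm_ge_zero]
    show "\<bar>hat (2 * real m - 1) x\<bar> * norm (scoef f (int q) m)
        \<le> (if 2 * int m - 1 = k \<or> 2 * int m - 1 = k + 1 then K else 0)"
      using K0 by (auto split: if_splits)
  qed
  also have "\<dots> \<le> K" by (rule sum_adjacent_odd_le) (use K0 in simp)
  finally show ?thesis .
qed

lemma level_sum_at_int:
  "level_sum f q (of_int k) = (\<Sum>m\<in>{1..2 ^ q}. if 2 * int m - 1 = k then scoef f (int q) m else 0)"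
  unfolding level_sum_def odd_as_int hat_at_int by (rule sum.cong) auto

lemma level_sum_at_even: "level_sum f q (2 * of_int i) = 0"
proof -
  have "2 * int m - 1 \<noteq> 2 * i" for m :: nat by presburger
  then have "level_sum f q (of_int (2 * i)) = 0" unfolding level_sum_at_int by (simp add: sum.neutral)
  then show ?thesis by simp
qed

lemma level_sum_at_odd:
  assumes "1 \<le> m" "m \<le> 2 ^ q"
  shows "level_sum f q (2 * real m - 1) = scoef f (int q) m"
proof -
  have "level_sum f q (of_int (2 * int m - 1)) = scoef f (int q) m"
    unfolding level_sum_at_int using assms by (simp add: sum.delta)
  then show ?thesis by (simp only: odd_as_int)
qed

lemma tt_nonneg: "1 \<le> m \<Longrightarrow> 0 \<le> tt0 j m" "1 \<le> m \<Longrightarrow> 0 \<le> tt1 j m" "0 \<le> tt2 j m"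
  by (auto simp: tt0_def tt1_def tt2_def)

lemma tt_le_1: "m \<le> 2 ^ j \<Longrightarrow> tt0 j m \<le> 1" "m \<le> 2 ^ j \<Longrightarrow> tt1 j m \<le> 1" "m \<le> 2 ^ j \<Longrightarrow> tt2 j m \<le> 1"
proof -
  assume "m \<le> 2 ^ j"
  then have m: "real m \<le> 2 ^ j" by (metis of_nat_le_iff of_nat_numeral of_nat_power)
  then have "2 * real m - 1 \<le> 2 * 2 ^ j" "real m - 1 \<le> 2 ^ j" by linarith+
  with m show "tt0 j m \<le> 1" "tt1 j m \<le> 1" "tt2 j m \<le> 1"
    by (simp_all add: tt0_def tt1_def tt2_def divide_le_eq)
qed

lemma tt_in_unit_interval:
  assumes "1 \<le> m" "m \<le> 2 ^ j"
  shows "tt0 j m \<in> {0..1}" "tt1 j m \<in> {0..1}" "tt2 j m \<in> {0..1}"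
  using tt_nonneg tt_le_1 assms by auto

lemma tt_order: "tt0 j m \<le> tt1 j m" "tt1 j m \<le> tt2 j m"
  and tt_midpoint: "tt1 j m = (tt0 j m + tt2 j m) / 2"
  and tt_half_width: "tt2 j m - tt1 j m = 1 / 2 ^ (j + 1)"
  by (auto simp: tt0_def tt1_def tt2_def field_simps)

definition second_difference :: "(real \<Rightarrow> 'a::real_vector) \<Rightarrow> nat \<Rightarrow> nat \<Rightarrow> 'a" where
  "second_difference f j m = 2 *\<^sub>R f (tt1 j m) - f (tt0 j m) - f (tt2 j m)"

lemma scoef_second_difference:
  "1 \<le> m \<Longrightarrow> m \<le> 2 ^ q \<Longrightarrow> scoef f (int q) m = second_difference f q m"
  by (simp add: scoef_def second_difference_def)

text \<open>A dyadic interval of level j lies inside a single cell of every coarser level q < j; in the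
  rescaled variable 2^(q+1) t this cell is a unit interval.\<close>
lemma coarse_cell_exists:
  assumes "q < j" "1 \<le> m"
  obtains k :: int where "of_int k \<le> 2 ^ (q + 1) * tt0 j m" "2 ^ (q + 1) * tt2 j m \<le> of_int k + 1"
proof -
  define d :: nat where "d = 2 ^ (j - q - 1)"
  have d0: "d > 0" by (simp add: d_def)
  have j: "j = (q + 1) + (j - q - 1)" using assms by simp
  have jd: "(2::real) ^ j = 2 ^ (q + 1) * real d"
    unfolding d_def by (subst j) (simp only: power_add of_nat_power of_nat_numeral)
  define k where "k = (m - 1) div d"
  have "k * d \<le> m - 1" by (simp add: k_def div_times_less_eq_dividend)
  then have "real (k * d) \<le> real (m - 1)" by (simp only: of_nat_le_iff)
  then have r1: "real k * real d \<le> real m - 1" using assms(2) by (simp add: of_nat_diff)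
  have "(m - 1) mod d < d" using d0 by simp
  moreover have "k * d + (m - 1) mod d = m - 1" by (simp add: k_def)
  moreover have "(k + 1) * d = k * d + d" by simp
  ultimately have "m \<le> (k + 1) * d" using assms(2) by arith
  then have "real m \<le> real ((k + 1) * d)" by (simp only: of_nat_le_iff)
  then have r2: "real m \<le> (real k + 1) * real d" by (simp add: algebra_simps)
  have e0: "2 ^ (q + 1) * tt0 j m = (real m - 1) / real d" using d0 by (simp add: tt0_def jd field_simps)
  have e2: "2 ^ (q + 1) * tt2 j m = real m / real d" using d0 by (simp add: tt2_def jd field_simps)
  have "of_int (int k) \<le> 2 ^ (q + 1) * tt0 j m" unfolding e0 using r1 d0 by (simp add: field_simps)
  moreover have "2 ^ (q + 1) * tt2 j m \<le> of_int (int k) + 1" unfolding e2 using r2 d0 by (simp add: field_simps)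
  ultimately show ?thesis by (rule that)
qed

lemma coarse_cell_contains_tt:
  assumes "q < j" "1 \<le> m"
  obtains k :: int where
    "of_int k \<le> 2 ^ (q + 1) * tt0 j m" "2 ^ (q + 1) * tt2 j m \<le> of_int k + 1"
    "of_int k \<le> 2 ^ (q + 1) * tt1 j m" "2 ^ (q + 1) * tt1 j m \<le> of_int k + 1"
    "of_int k \<le> 2 ^ (q + 1) * tt2 j m" "2 ^ (q + 1) * tt0 j m \<le> of_int k + 1"
proof -
  obtain k :: int where k: "of_int k \<le> 2 ^ (q + 1) * tt0 j m" "2 ^ (q + 1) * tt2 j m \<le> of_int k + 1"
    using coarse_cell_exists[OF assms] .
  have ord: "2 ^ (q + 1) * tt0 j m \<le> 2 ^ (q + 1) * tt1 j m" "2 ^ (q + 1) * tt1 j m \<le> 2 ^ (q + 1) * tt2 j m"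
    using tt_order[of j m] by auto
  with k have "of_int k \<le> 2 ^ (q + 1) * tt1 j m" "2 ^ (q + 1) * tt1 j m \<le> of_int k + 1"
    "of_int k \<le> 2 ^ (q + 1) * tt2 j m" "2 ^ (q + 1) * tt0 j m \<le> of_int k + 1"
    by linarith+
  with k show ?thesis by (rule that)
qed

section \<open>Schauder blocks\<close>

lemma sDelta_minus_1: "sDelta f (-1) t = f 0"
proof -
  have "{0..1::nat} = {0, 1}" by auto
  then show ?thesis by (simp add: sDelta_def schauder_def scoef_def)
qed

lemma sDelta_eq_level_sum:
  assumes "0 \<le> t"
  shows "sDelta f (int q) t = (if q = 0 then t else 0) *\<^sub>R (f 1 - f 0) + (1/2) *\<^sub>R level_sum f q (2 ^ (q + 1) * t)"
proof -
  have split: "{0..(2::nat) ^ q} = insert 0 {1..2 ^ q}" by auto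
  have "(\<Sum>m\<in>{1..2 ^ q}. schauder (int q) m t *\<^sub>R scoef f (int q) m)
      = (\<Sum>m\<in>{1..2 ^ q}. (1/2) *\<^sub>R (hat (2 * real m - 1) (2 ^ (q + 1) * t) *\<^sub>R scoef f (int q) m))"
    by (rule sum.cong) (use assms in \<open>auto simp: schauder_eq_hat\<close>)
  also have "\<dots> = (1/2) *\<^sub>R level_sum f q (2 ^ (q + 1) * t)"
    by (simp add: level_sum_def scaleR_sum_right)
  finally have fine: "(\<Sum>m\<in>{1..2 ^ q}. schauder (int q) m t *\<^sub>R scoef f (int q) m)
      = (1/2) *\<^sub>R level_sum f q (2 ^ (q + 1) * t)" .
  have linear: "schauder (int q) 0 t *\<^sub>R scoef f (int q) 0 = (if q = 0 then t else 0) *\<^sub>R (f 1 - f 0)"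
    using assms by (cases "q = 0") (auto simp: schauder_0_0 schauder_index_0 scoef_def)
  have "sDelta f (int q) t = schauder (int q) 0 t *\<^sub>R scoef f (int q) 0
      + (\<Sum>m\<in>{1..2 ^ q}. schauder (int q) m t *\<^sub>R scoef f (int q) m)"
    unfolding sDelta_def nat_int split by (subst sum.insert) auto
  then show ?thesis by (simp only: fine linear)
qed

lemma midpoint_combination:
  fixes d h0 h1 h2 :: "'a::real_vector"
  assumes "a + c = 2 * b" "h0 + h2 = 2 *\<^sub>R h1"
  shows "(a *\<^sub>R d + (1/2) *\<^sub>R h0) + (c *\<^sub>R d + (1/2) *\<^sub>R h2) = 2 *\<^sub>R (b *\<^sub>R d + (1/2) *\<^sub>R h1)"
proof -
  have "(a *\<^sub>R d + (1/2) *\<^sub>R h0) + (c *\<^sub>R d + (1/2) *\<^sub>R h2) = (a + c) *\<^sub>R d + (1/2) *\<^sub>R (h0 + h2)"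
    by (simp add: algebra_simps)
  then show ?thesis using assms by (simp add: algebra_simps)
qed

lemma sDelta_midpoint:
  assumes "-1 \<le> q" "q < int j" "1 \<le> m"
  shows "sDelta f q (tt0 j m) + sDelta f q (tt2 j m) = 2 *\<^sub>R sDelta f q (tt1 j m)"
proof (cases "q = -1")
  case True
  then show ?thesis by (simp add: sDelta_minus_1 scaleR_2)
next
  case False
  define q' where "q' = nat q"
  have q: "q = int q'" using assms(1) False by (simp add: q'_def)
  with assms have "q' < j" by simp
  then obtain k where k: "of_int k \<le> 2 ^ (q' + 1) * tt0 j m" "2 ^ (q' + 1) * tt2 j m \<le> of_int k + 1"
    "of_int k \<le> 2 ^ (q' + 1) * tt2 j m" "2 ^ (q' + 1) * tt0 j m \<le> of_int k + 1"
    using coarse_cell_contains_tt[OF _ assms(3)] by blast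
  have mid: "2 ^ (q' + 1) * tt1 j m = (2 ^ (q' + 1) * tt0 j m + 2 ^ (q' + 1) * tt2 j m) / 2"
    by (simp add: tt_midpoint field_simps)
  have fine: "level_sum f q' (2 ^ (q' + 1) * tt0 j m) + level_sum f q' (2 ^ (q' + 1) * tt2 j m)
      = 2 *\<^sub>R level_sum f q' (2 ^ (q' + 1) * tt1 j m)"
    unfolding mid by (rule level_sum_midpoint[OF k(1,4,3,2)])
  have linear: "(if q' = 0 then tt0 j m else 0) + (if q' = 0 then tt2 j m else 0)
      = 2 * (if q' = 0 then tt1 j m else 0)"
    by (simp add: tt_midpoint)
  show ?thesis unfolding q using assms(3)
    by (simp only: sDelta_eq_level_sum tt_nonneg midpoint_combination[OF linear fine])
qed

lemma sDelta_lipschitz: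
  fixes k :: int
  assumes "0 \<le> x" "0 \<le> z" "of_int k \<le> 2 ^ (q + 1) * x" "2 ^ (q + 1) * x \<le> of_int k + 1"
    "of_int k \<le> 2 ^ (q + 1) * z" "2 ^ (q + 1) * z \<le> of_int k + 1"
    and K: "\<And>m. m \<le> 2 ^ q \<Longrightarrow> norm (scoef f (int q) m) \<le> K"
  shows "norm (sDelta f (int q) x - sDelta f (int q) z) \<le> 2 ^ (q + 1) * \<bar>x - z\<bar> * K"
proof -
  have K0: "K \<ge> 0" using order_trans[OF norm_ge_zero K[of 0]] by simp
  define L where "L = (if q = 0 then x - z else 0) *\<^sub>R (f 1 - f 0)"
  define F where "F = level_sum f q (2 ^ (q + 1) * x) - level_sum f q (2 ^ (q + 1) * z)"
  have "norm L \<le> \<bar>x - z\<bar> * K"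
    using K[of 0] K0 by (cases "q = 0") (auto simp: L_def scoef_def intro: mult_left_mono)
  also have "\<dots> \<le> 2 ^ q * (\<bar>x - z\<bar> * K)"
    using mult_right_mono[of 1 "2 ^ q" "\<bar>x - z\<bar> * K"] K0 by simp
  finally have nL: "norm L \<le> 2 ^ q * (\<bar>x - z\<bar> * K)" .
  have "norm F \<le> \<bar>2 ^ (q + 1) * x - 2 ^ (q + 1) * z\<bar> * K"
    unfolding F_def by (rule level_sum_lipschitz[OF assms(3-6)]) (use K in auto)
  also have "\<dots> = 2 * (2 ^ q * (\<bar>x - z\<bar> * K))"
    by (simp add: abs_mult flip: right_diff_distrib)
  finally have nF: "norm ((1/2) *\<^sub>R F) \<le> 2 ^ q * (\<bar>x - z\<bar> * K)" by simp
  have "sDelta f (int q) x - sDelta f (int q) z = L + (1/2) *\<^sub>R F"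
    using assms(1,2) by (simp add: sDelta_eq_level_sum L_def F_def algebra_simps)
  then have "norm (sDelta f (int q) x - sDelta f (int q) z) \<le> norm L + norm ((1/2) *\<^sub>R F)"
    by (simp only: norm_triangle_ineq)
  also have "\<dots> \<le> 2 ^ (q + 1) * \<bar>x - z\<bar> * K" using nL nF by simp
  finally show ?thesis .
qed

lemma sDelta_bounded:
  assumes "t \<in> {0..1}" and K: "\<And>m. m \<le> 2 ^ q \<Longrightarrow> norm (scoef f (int q) m) \<le> K"
  shows "norm (sDelta f (int q) t) \<le> 2 * K"
proof -
  define L where "L = (if q = 0 then t else 0) *\<^sub>R (f 1 - f 0)"
  define F where "F = level_sum f q (2 ^ (q + 1) * t)"
  have K0: "K \<ge> 0" using order_trans[OF norm_ge_zero K[of 0]] by simp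
  have "norm L \<le> K"
    using K[of 0] K0 assms(1) mult_mono[of t 1 "norm (f 1 - f 0)" K] by (auto simp: L_def scoef_def)
  moreover have "norm F \<le> K"
    unfolding F_def by (rule level_sum_bounded[of "\<lfloor>2 ^ (q + 1) * t\<rfloor>"]) (use K in auto)
  moreover have "norm (sDelta f (int q) t) \<le> norm L + norm ((1/2) *\<^sub>R F)"
    using assms(1) by (simp only: L_def F_def sDelta_eq_level_sum norm_triangle_ineq atLeastAtMost_iff)
  ultimately show ?thesis using K0 by simp
qed

lemma sDelta_on_grid:
  "sDelta f (int q) (real i / 2 ^ q) = (if q = 0 then real i else 0) *\<^sub>R (f 1 - f 0)"
proof -
  have "2 ^ (q + 1) * (real i / 2 ^ q) = 2 * of_int (int i)" by simp
  then show ?thesis using level_sum_at_even[of f q "int i"] by (simp add: sDelta_eq_level_sum)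
qed

lemma sDelta_at_centre:
  assumes "1 \<le> m" "m \<le> 2 ^ q"
  shows "sDelta f (int q) (tt1 q m) = (if q = 0 then tt1 q m else 0) *\<^sub>R (f 1 - f 0) + (1/2) *\<^sub>R scoef f (int q) m"
proof -
  have "2 ^ (q + 1) * tt1 q m = 2 * real m - 1" by (simp add: tt1_def)
  then show ?thesis using assms by (simp add: sDelta_eq_level_sum tt_nonneg level_sum_at_odd)
qed

text \<open>Blocks of level p > j vanish at the dyadic points of level j, as these lie on the grid of
  level p.\<close>
lemma sDelta_vanishes_at_coarser_points:
  assumes "j < p" "1 \<le> m"
  shows "sDelta f (int p) (tt0 j m) = 0" "sDelta f (int p) (tt1 j m) = 0" "sDelta f (int p) (tt2 j m) = 0"
proof -
  define d :: nat where "d = 2 ^ (p - j - 1)"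
  have p: "p = (j + 1) + (p - j - 1)" using assms by simp
  have pd: "(2::real) ^ p = 2 ^ (j + 1) * real d"
    unfolding d_def by (subst p) (simp only: power_add of_nat_power of_nat_numeral)
  have d0: "real d > 0" by (simp add: d_def)
  have "tt0 j m = real ((m - 1) * (2 * d)) / 2 ^ p"
    using assms(2) d0 by (simp add: tt0_def pd of_nat_diff field_simps)
  moreover have "tt1 j m = real ((2 * m - 1) * d) / 2 ^ p"
    using assms(2) d0 by (simp add: tt1_def pd of_nat_diff field_simps)
  moreover have "tt2 j m = real (m * (2 * d)) / 2 ^ p"
    using d0 by (simp add: tt2_def pd field_simps)
  moreover have "p \<noteq> 0" using assms by simp
  ultimately show "sDelta f (int p) (tt0 j m) = 0" "sDelta f (int p) (tt1 j m) = 0"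
    "sDelta f (int p) (tt2 j m) = 0"
    by (simp_all only: sDelta_on_grid) simp_all
qed

text \<open>The block of level j only sees its own coefficient in the second difference of level j:
  the endpoints lie on the grid of level j, where only the linear term survives.\<close>
lemma sDelta_second_difference_own_level:
  assumes "1 \<le> m" "m \<le> 2 ^ j"
  shows "second_difference (sDelta f (int j)) j m = scoef f (int j) m"
proof -
  have tt0: "tt0 j m = real (m - 1) / 2 ^ j" using assms(1) by (simp add: tt0_def of_nat_diff)
  have end0: "sDelta f (int j) (tt0 j m) = (if j = 0 then tt0 j m else 0) *\<^sub>R (f 1 - f 0)"
    unfolding tt0 sDelta_on_grid by simp
  have end2: "sDelta f (int j) (tt2 j m) = (if j = 0 then tt2 j m else 0) *\<^sub>R (f 1 - f 0)"
    using sDelta_on_grid[of f j m] by (simp add: tt2_def)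
  have "second_difference (sDelta f (int j)) j m
      = (2 * (if j = 0 then tt1 j m else 0) - (if j = 0 then tt0 j m else 0) - (if j = 0 then tt2 j m else 0))
        *\<^sub>R (f 1 - f 0) + scoef f (int j) m"
    unfolding second_difference_def end0 end2 sDelta_at_centre[OF assms] by (simp add: algebra_simps)
  also have "2 * (if j = 0 then tt1 j m else 0) - (if j = 0 then tt0 j m else 0) - (if j = 0 then tt2 j m else 0) = 0"
    using tt_midpoint[of j m] by (cases "j = 0") auto
  finally show ?thesis by simp
qed

text \<open>On the right half of a dyadic interval of level j > p, the block of level p changes by at
  most its slope 2^(p+1) K times the half-width 2^(-j-1).\<close>
lemma sDelta_change_on_half_interval:
  assumes "p < j" "1 \<le> m" and K: "\<And>m. m \<le> 2 ^ p \<Longrightarrow> norm (scoef f (int p) m) \<le> K"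
  shows "norm (sDelta f (int p) (tt2 j m) - sDelta f (int p) (tt1 j m)) \<le> 2 ^ (p + 1) * (1 / 2 ^ (j + 1)) * K"
proof -
  obtain k :: int where k: "of_int k \<le> 2 ^ (p + 1) * tt2 j m" "2 ^ (p + 1) * tt2 j m \<le> of_int k + 1"
      "of_int k \<le> 2 ^ (p + 1) * tt1 j m" "2 ^ (p + 1) * tt1 j m \<le> of_int k + 1"
    using coarse_cell_contains_tt[OF assms(1,2)] by metis
  have "norm (sDelta f (int p) (tt2 j m) - sDelta f (int p) (tt1 j m)) \<le> 2 ^ (p + 1) * \<bar>tt2 j m - tt1 j m\<bar> * K"
    by (rule sDelta_lipschitz[OF _ _ k K]) (use tt_nonneg assms(2) in auto)
  then show ?thesis by (simp add: tt_half_width)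
qed

section \<open>Partial sums: piecewise linear interpolation\<close>

lemma sS_minus_1: "sS f (-1) t = f 0"
  by (simp add: sS_def sDelta_minus_1)

lemma sS_step:
  assumes "-1 \<le> r" shows "sS f (r + 1) t = sS f r t + sDelta f (r + 1) t"
proof -
  have "{-1..r + 1} = insert (r + 1) {-1..r}" using assms by auto
  then show ?thesis unfolding sS_def by (simp add: add.commute)
qed

lemma sS_shifted_Suc: "sS f (int (Suc p) - 1) t = sS f (int p - 1) t + sDelta f (int p) t"
  using sS_step[of "int p - 1" f t] by simp

lemma sS_midpoint:
  assumes "p \<le> j" "1 \<le> m"
  shows "sS f (int p - 1) (tt0 j m) + sS f (int p - 1) (tt2 j m) = 2 *\<^sub>R sS f (int p - 1) (tt1 j m)"
  using assms(1)
proof (induction p)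
  case 0
  then show ?case by (simp add: sS_minus_1 scaleR_2)
next
  case (Suc p)
  then have IH: "sS f (int p - 1) (tt0 j m) + sS f (int p - 1) (tt2 j m) = 2 *\<^sub>R sS f (int p - 1) (tt1 j m)"
    by simp
  have D: "sDelta f (int p) (tt0 j m) + sDelta f (int p) (tt2 j m) = 2 *\<^sub>R sDelta f (int p) (tt1 j m)"
    by (rule sDelta_midpoint) (use Suc assms in auto)
  have "sS f (int (Suc p) - 1) (tt0 j m) + sS f (int (Suc p) - 1) (tt2 j m)
     = (sS f (int p - 1) (tt0 j m) + sS f (int p - 1) (tt2 j m))
       + (sDelta f (int p) (tt0 j m) + sDelta f (int p) (tt2 j m))"
    by (simp only: sS_shifted_Suc) (simp add: algebra_simps)
  then show ?case by (simp only: IH D sS_shifted_Suc scaleR_add_right)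
qed

lemma sS_lipschitz:
  assumes "p \<le> j" "1 \<le> m"
    and K: "\<And>q m'. m' \<le> 2 ^ q \<Longrightarrow> norm (scoef f (int q) m') \<le> K"
  shows "norm (sS f (int p - 1) (tt2 j m) - sS f (int p - 1) (tt1 j m)) \<le> 2 ^ (p + 1) * (1 / 2 ^ (j + 1)) * K"
  using assms(1)
proof (induction p)
  case 0
  have "K \<ge> 0" using order_trans[OF norm_ge_zero K[of 0 0]] by simp
  then show ?case by (simp add: sS_minus_1)
next
  case (Suc p)
  then have IH: "norm (sS f (int p - 1) (tt2 j m) - sS f (int p - 1) (tt1 j m)) \<le> 2 ^ (p + 1) * (1 / 2 ^ (j + 1)) * K"
    by simp
  have D: "norm (sDelta f (int p) (tt2 j m) - sDelta f (int p) (tt1 j m)) \<le> 2 ^ (p + 1) * (1 / 2 ^ (j + 1)) * K"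
    by (rule sDelta_change_on_half_interval[OF _ assms(2) K]) (use Suc in simp)
  have "norm (sS f (int (Suc p) - 1) (tt2 j m) - sS f (int (Suc p) - 1) (tt1 j m))
     = norm ((sS f (int p - 1) (tt2 j m) - sS f (int p - 1) (tt1 j m))
        + (sDelta f (int p) (tt2 j m) - sDelta f (int p) (tt1 j m)))"
    by (simp only: sS_shifted_Suc) (simp add: algebra_simps)
  also have "\<dots> \<le> 2 ^ (p + 1) * (1 / 2 ^ (j + 1)) * K + 2 ^ (p + 1) * (1 / 2 ^ (j + 1)) * K"
    using norm_triangle_le[OF add_mono[OF IH D]] .
  finally show ?case by (simp add: mult_ac)
qed

text \<open>Each block adds at most 2 K to the size of the partial sums.\<close>
lemma sS_bounded:
  assumes "t \<in> {0..1}" and K: "\<And>q m'. m' \<le> 2 ^ q \<Longrightarrow> norm (scoef f (int q) m') \<le> K"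
  shows "norm (sS f (int p - 1) t) \<le> norm (f 0) + 2 * real p * K"
proof (induction p)
  case 0
  then show ?case by (simp add: sS_minus_1)
next
  case (Suc p)
  have "norm (sS f (int (Suc p) - 1) t) \<le> norm (sS f (int p - 1) t) + norm (sDelta f (int p) t)"
    by (simp only: sS_shifted_Suc norm_triangle_ineq)
  also have "\<dots> \<le> (norm (f 0) + 2 * real p * K) + 2 * K"
    by (rule add_mono[OF Suc sDelta_bounded[OF assms(1) K]])
  finally show ?case by (simp add: algebra_simps)
qed

text \<open>If S_{j-1} f interpolates f at the endpoints of a dyadic interval of level j >= 1, then
  S_j f interpolates f also at its centre: the affine part gives the average of the endpoint
  values and the block of level j adds the correction by half the coefficient.\<close>
lemma sS_interpolates_centre:
  assumes m: "1 \<le> m" "m \<le> 2 ^ Suc p"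
    and ends: "sS f (int p) (tt0 (Suc p) m) = f (tt0 (Suc p) m)" "sS f (int p) (tt2 (Suc p) m) = f (tt2 (Suc p) m)"
  shows "sS f (int (Suc p)) (tt1 (Suc p) m) = f (tt1 (Suc p) m)"
proof -
  have "sS f (int p) (tt0 (Suc p) m) + sS f (int p) (tt2 (Suc p) m) = 2 *\<^sub>R sS f (int p) (tt1 (Suc p) m)"
    using sS_midpoint[of "Suc p" "Suc p" m f] m by simp
  then have avg: "sS f (int p) (tt1 (Suc p) m) = (1/2) *\<^sub>R (f (tt0 (Suc p) m) + f (tt2 (Suc p) m))"
    unfolding ends by simp
  have "sDelta f (int (Suc p)) (tt1 (Suc p) m)
      = (1/2) *\<^sub>R (2 *\<^sub>R f (tt1 (Suc p) m) - f (tt0 (Suc p) m) - f (tt2 (Suc p) m))"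
    using sDelta_at_centre[OF m, of f] scoef_second_difference[OF m, of f]
    by (simp add: second_difference_def)
  moreover have "sS f (int (Suc p)) t = sS f (int p) t + sDelta f (int (Suc p)) t" for t
    using sS_step[of "int p" f t] by (simp add: add.commute)
  ultimately show ?thesis using avg by (simp add: algebra_simps)
qed

lemma sS_interpolates:
  assumes "i \<le> 2 ^ (p + 1)"
  shows "sS f (int p) (real i / 2 ^ (p + 1)) = f (real i / 2 ^ (p + 1))"
  using assms
proof (induction p arbitrary: i)
  case 0
  have base: "sS f 0 t = f 0 + t *\<^sub>R (f 1 - f 0) + (hat 1 (2 * t) / 2) *\<^sub>R (2 *\<^sub>R f (1/2) - f 0 - f 1)"
    if "0 \<le> t" for t
    using sS_step[of "-1" f t] sDelta_eq_level_sum[OF that, of f 0]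
    by (simp add: sS_minus_1 level_sum_def scoef_def tt0_def tt1_def tt2_def)
  have "i = 0 \<or> i = 1 \<or> i = 2" using 0 by auto
  then show ?case
  proof (elim disjE)
    assume "i = 1"
    have "(1/2) *\<^sub>R a + (1/2) *\<^sub>R a = a" for a :: 'a by (simp flip: scaleR_add_left)
    with \<open>i = 1\<close> show ?thesis by (simp add: base hat_def algebra_simps)
  qed (simp_all add: base hat_def)
next
  case (Suc p)
  show ?case
  proof (cases "even i")
    case True
    then obtain i' where i: "i = 2 * i'" by blast
    have "real i / 2 ^ (Suc p + 1) = real i' / 2 ^ (p + 1)" by (simp add: i)
    moreover have "sDelta f (int (Suc p)) (real i' / 2 ^ Suc p) = 0"
      using sDelta_on_grid[of f "Suc p" i'] by simp
    ultimately show ?thesis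
      using Suc.IH[of i'] Suc.prems sS_step[of "int p" f] by (simp add: i add.commute)
  next
    case False
    then obtain i' where i: "i = 2 * i' + 1" by (metis oddE)
    have m: "1 \<le> i' + 1" "i' + 1 \<le> 2 ^ Suc p" using Suc.prems i by auto
    have "real i / 2 ^ (Suc p + 1) = tt1 (Suc p) (i' + 1)" by (simp add: i tt1_def)
    moreover have "tt0 (Suc p) (i' + 1) = real i' / 2 ^ (p + 1)" by (simp add: tt0_def)
    moreover have "tt2 (Suc p) (i' + 1) = real (i' + 1) / 2 ^ (p + 1)" by (simp add: tt2_def)
    ultimately show ?thesis
      using sS_interpolates_centre[OF m] Suc.IH[of i'] Suc.IH[of "i' + 1"] m by simp
  qed
qed

lemma schauder_continuous:
  assumes "-1 \<le> q" shows "continuous_on {0..1} (schauder q m)"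
proof (cases "q = -1")
  case True
  then have "schauder q m = (\<lambda>_. 1)" by (simp add: fun_eq_iff schauder_def)
  then show ?thesis by simp
next
  case False
  define q' where "q' = nat q"
  have q: "q = int q'" using assms False by (simp add: q'_def)
  consider "m = 0" "q' = 0" | "m = 0" "q' > 0" | "1 \<le> m" "m \<le> 2 ^ q'" | "2 ^ q' < m"
    by linarith
  then show ?thesis
  proof cases
    case 1
    show ?thesis
      by (rule continuous_on_cong[THEN iffD1, OF refl _ continuous_on_id]) (use 1 in \<open>simp add: q schauder_0_0\<close>)
  next
    case 3
    have "continuous_on {0..1} (\<lambda>t. hat (2 * real m - 1) (2 ^ (q' + 1) * t) / 2)"
      unfolding hat_def by (intro continuous_intros) auto
    show ?thesis
      by (rule continuous_on_cong[THEN iffD1, OF refl _ \<open>continuous_on {0..1} _\<close>])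
         (use 3 in \<open>simp add: q schauder_eq_hat\<close>)
  qed (simp_all add: q schauder_index_0 schauder_beyond)
qed

lemma sDelta_continuous: "-1 \<le> q \<Longrightarrow> continuous_on {0..1} (sDelta f q)"
  unfolding sDelta_def by (intro continuous_intros schauder_continuous)

lemma sS_continuous: "continuous_on {0..1} (sS f r)"
  unfolding sS_def by (intro continuous_on_sum sDelta_continuous) auto

lemma para_term_continuous: "continuous_on {0..1} (para_term v w p)"
  unfolding para_term_def[abs_def]
  by (rule blinfun.continuous_on[OF sS_continuous sDelta_continuous]) simp

text \<open>All blocks of w vanish at 0, and only the block of level 0 survives at 1.\<close>
lemma para_at_0: "para v w 0 = 0"
proof -
  have "sDelta w (int p) 0 = 0" for p using sDelta_on_grid[of w p 0] by simp
  then show ?thesis by (simp add: para_def para_term_def)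
qed

lemma para_at_1: "para v w 1 = blinfun_apply (v 0) (w 1 - w 0)"
proof -
  have "sDelta w (int p) 1 = (if p = 0 then w 1 - w 0 else 0)" for p
    using sDelta_on_grid[of w p "2 ^ p"] by simp
  then have term_at_1: "para_term v w p 1 = (if p = 0 then blinfun_apply (v 0) (w 1 - w 0) else 0)" for p
    by (simp add: para_term_def sS_minus_1)
  have "para v w 1 = (\<Sum>p\<in>{0}. para_term v w p 1)"
    unfolding para_def by (rule suminf_finite) (auto simp: term_at_1)
  then show ?thesis by (simp add: term_at_1)
qed

lemma sup_norm_upper:
  assumes "continuous_on {0..1} f" "t \<in> {0..1}"
  shows "norm (f t) \<le> sup_norm f"
proof -
  have "compact ((\<lambda>t. norm (f t)) ` {0..1})"
    by (intro compact_continuous_image continuous_intros assms(1)) simp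
  then have "bdd_above ((\<lambda>t. norm (f t)) ` {0..1})"
    by (intro bounded_imp_bdd_above compact_imp_bounded)
  then show ?thesis unfolding sup_norm_def by (rule cSUP_upper[OF assms(2)])
qed

text \<open>Every coefficient is a second difference of values, hence at most four times the sup norm.\<close>
lemma scoef_bounded_by_sup:
  assumes V: "\<And>t. t \<in> {0..1} \<Longrightarrow> norm (f t) \<le> V" and m: "m \<le> 2 ^ q"
  shows "norm (scoef f (int q) m) \<le> 4 * V"
proof -
  have V0: "0 \<le> V" using order_trans[OF norm_ge_zero V[of 0]] by simp
  consider "m = 0" "q = 0" | "m = 0" "q \<noteq> 0" | "1 \<le> m" by linarith
  then show ?thesis
  proof cases
    case 1
    then show ?thesis using V[of 0] V[of 1] V0 norm_triangle_ineq4[of "f 1" "f 0"] by (simp add: scoef_def)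
  next
    case 3
    have "norm (2 *\<^sub>R f (tt1 q m) - f (tt0 q m) - f (tt2 q m))
        \<le> 2 * norm (f (tt1 q m)) + norm (f (tt0 q m)) + norm (f (tt2 q m))"
      using norm_triangle_ineq4[of "2 *\<^sub>R f (tt1 q m) - f (tt0 q m)" "f (tt2 q m)"]
        norm_triangle_ineq4[of "2 *\<^sub>R f (tt1 q m)" "f (tt0 q m)"] by simp
    moreover have "norm (f (tt0 q m)) \<le> V" "norm (f (tt1 q m)) \<le> V" "norm (f (tt2 q m)) \<le> V"
      using V tt_in_unit_interval[OF 3 m] by auto
    ultimately show ?thesis by (simp add: scoef_second_difference[OF 3 m] second_difference_def)
  qed (use V0 in \<open>simp add: scoef_def\<close>)
qed

lemma scoef_bounded_by_holder_norm:
  assumes "f \<in> holder_space \<beta>" "m \<le> 2 ^ q"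
  shows "(2 powr \<beta>) ^ q * norm (scoef f (int q) m) \<le> holder_norm \<beta> f"
proof -
  have "(int q, m) \<in> schauder_idx" using assms(2) by (auto simp: schauder_idx_def)
  moreover have "bdd_above ((\<lambda>pm. 2 powr (real_of_int (fst pm) * \<beta>) * norm (scoef f (fst pm) (snd pm))) ` schauder_idx)"
    using assms(1) by (simp add: holder_space_def)
  ultimately have "2 powr (real q * \<beta>) * norm (scoef f (int q) m) \<le> holder_norm \<beta> f"
    unfolding holder_norm_def by (metis (no_types, lifting) cSUP_upper fst_conv snd_conv of_int_of_nat_eq)
  moreover have "2 powr (real q * \<beta>) = (2 powr \<beta>) ^ q"
    by (simp add: powr_realpow[symmetric] powr_powr mult.commute)
  ultimately show ?thesis by simp
qed

section \<open>The paraproduct estimate\<close>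

lemma second_difference_apply:
  fixes A :: "real \<Rightarrow> 'a::real_normed_vector \<Rightarrow>\<^sub>L 'b::real_normed_vector"
  assumes "A (tt0 j m) + A (tt2 j m) = 2 *\<^sub>R A (tt1 j m)"
  shows "second_difference (\<lambda>t. blinfun_apply (A t) (B t)) j m
       = blinfun_apply (A (tt1 j m)) (second_difference B j m)
         + blinfun_apply (A (tt2 j m) - A (tt1 j m)) (B (tt0 j m) - B (tt2 j m))"
proof -
  have A0: "A (tt0 j m) = 2 *\<^sub>R A (tt1 j m) - A (tt2 j m)" using assms by (simp add: eq_diff_eq)
  show ?thesis
    unfolding second_difference_def A0 by (simp add: blinfun.bilinear_simps algebra_simps scaleR_2)
qed

lemma second_difference_apply_affine:
  fixes A :: "real \<Rightarrow> 'a::real_normed_vector \<Rightarrow>\<^sub>L 'b::real_normed_vector"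
  assumes A_mid: "A (tt0 j m) + A (tt2 j m) = 2 *\<^sub>R A (tt1 j m)"
    and B_mid: "B (tt0 j m) + B (tt2 j m) = 2 *\<^sub>R B (tt1 j m)"
  shows "second_difference (\<lambda>t. blinfun_apply (A t) (B t)) j m
       = blinfun_apply (A (tt2 j m) - A (tt1 j m)) (2 *\<^sub>R (B (tt1 j m) - B (tt2 j m)))"
proof -
  have "second_difference B j m = 0"
    using B_mid by (simp add: second_difference_def algebra_simps)
  moreover have "B (tt0 j m) - B (tt2 j m) = 2 *\<^sub>R (B (tt1 j m) - B (tt2 j m))"
    using B_mid by (simp add: algebra_simps scaleR_2)
  ultimately show ?thesis by (simp add: second_difference_apply[OF A_mid])
qed

lemma geometric_sum_le:
  fixes x :: real assumes "1 < x"
  shows "(\<Sum>p<j. x ^ p) \<le> x ^ j / (x - 1)"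
proof -
  have "(\<Sum>p<j. x ^ p) = (x ^ j - 1) / (x - 1)" using assms by (simp add: geometric_sum)
  also have "\<dots> \<le> x ^ j / (x - 1)" using assms by (simp add: divide_right_mono)
  finally show ?thesis .
qed

context
  fixes v :: "real \<Rightarrow> 'a::real_normed_vector \<Rightarrow>\<^sub>L 'b::banach" and w :: "real \<Rightarrow> 'a"
    and V W b :: real
  assumes v_bounded: "\<And>t. t \<in> {0..1} \<Longrightarrow> norm (v t) \<le> V"
    and w_coef_decay: "\<And>q m. m \<le> 2 ^ q \<Longrightarrow> b ^ q * norm (scoef w (int q) m) \<le> W"
    and b_gt_1: "1 < b"
begin

lemma V_nonneg: "0 \<le> V"
  using order_trans[OF norm_ge_zero v_bounded[of 0]] by simp

lemma W_nonneg: "0 \<le> W"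
proof -
  have "norm (scoef w (int 0) 0) \<le> W" using w_coef_decay[of 0 0] by simp
  then show ?thesis using norm_ge_zero order_trans by blast
qed

lemma w_coef_bound: "m \<le> 2 ^ q \<Longrightarrow> norm (scoef w (int q) m) \<le> W / b ^ q"
  using w_coef_decay[of m q] b_gt_1 by (simp add: field_simps)

lemma v_coef_bound: "m \<le> 2 ^ q \<Longrightarrow> norm (scoef v (int q) m) \<le> 4 * V"
  by (rule scoef_bounded_by_sup[OF v_bounded])

text \<open>The p-th term is O(p b^(-p)): S_{p-1} v grows at most linearly in p, and Delta_p w is
  bounded by twice the level-p coefficients of w.\<close>
lemma para_term_bounded:
  assumes "t \<in> {0..1}"
  shows "norm (para_term v w p t) \<le> 16 * V * W * (real (Suc p) * (1 / b) ^ p)"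
proof -
  have "norm (sS v (int p - 1) t) \<le> V + 2 * real p * (4 * V)"
    using sS_bounded[OF assms v_coef_bound, of p] v_bounded[of 0] by simp
  moreover have "norm (sDelta w (int p) t) \<le> 2 * (W / b ^ p)"
    by (rule sDelta_bounded[OF assms w_coef_bound])
  ultimately have "norm (para_term v w p t) \<le> (V + 2 * real p * (4 * V)) * (2 * (W / b ^ p))"
    unfolding para_term_def using V_nonneg
    by (intro order_trans[OF norm_blinfun] mult_mono) simp_all
  also have "\<dots> = (2 + 16 * real p) * (V * (W / b ^ p))" by (simp add: algebra_simps)
  also have "\<dots> \<le> (16 * real (Suc p)) * (V * (W / b ^ p))"
    using V_nonneg W_nonneg b_gt_1 by (intro mult_right_mono) simp_all
  also have "\<dots> = 16 * V * W * (real (Suc p) * (1 / b) ^ p)"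
    by (simp add: power_one_over)
  finally show ?thesis .
qed

lemma para_majorant_summable: "summable (\<lambda>p. 16 * V * W * (real (Suc p) * (1 / b) ^ p))"
proof -
  have "summable (\<lambda>n. diffs (\<lambda>n. 1::real) n * (1 / b) ^ n)"
    by (rule termdiff_converges[of "1 / b" 1]) (use b_gt_1 in auto)
  then show ?thesis by (intro summable_mult) (simp add: diffs_def)
qed

lemma para_uniform_limit:
  "uniform_limit {0..1} (\<lambda>N t. \<Sum>p<N. para_term v w p t) (para v w) sequentially"
proof -
  have "para v w = (\<lambda>t. \<Sum>p. para_term v w p t)" by (simp add: fun_eq_iff para_def)
  moreover have "uniform_limit {0..1} (\<lambda>N t. \<Sum>p<N. para_term v w p t) (\<lambda>t. \<Sum>p. para_term v w p t) sequentially"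
    by (rule Weierstrass_m_test[OF _ para_majorant_summable]) (rule para_term_bounded)
  ultimately show ?thesis by simp
qed

lemma para_sums:
  assumes "t \<in> {0..1}" shows "(\<lambda>p. para_term v w p t) sums para v w t"
proof -
  have "summable (\<lambda>p. para_term v w p t)"
    by (rule summable_comparison_test'[OF para_majorant_summable]) (rule para_term_bounded[OF assms])
  then show ?thesis unfolding para_def by (rule summable_sums)
qed

lemma para_continuous: "continuous_on {0..1} (para v w)"
  by (rule uniform_limit_theorem[OF _ para_uniform_limit])
     (auto intro!: always_eventually continuous_on_sum para_term_continuous)

text \<open>Terms of level p > j have vanishing second difference of level j, so the coefficient of
  the paraproduct is a finite sum of second differences of its terms.\<close>
lemma para_scoef_finite_sum:
  assumes m: "1 \<le> m" "m \<le> 2 ^ j"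
  shows "scoef (para v w) (int j) m
      = (\<Sum>p<j. second_difference (para_term v w p) j m) + second_difference (para_term v w j) j m"
proof -
  define c where "c p = second_difference (para_term v w p) j m" for p
  have "c sums second_difference (para v w) j m"
    unfolding c_def second_difference_def
    by (intro sums_diff sums_scaleR_right para_sums tt_in_unit_interval[OF m])
  moreover have "c p = 0" if "p \<notin> {..j}" for p
    using sDelta_vanishes_at_coarser_points[of j p m w] that m
    by (simp add: c_def second_difference_def para_term_def)
  ultimately have "second_difference (para v w) j m = sum c {..j}"
    by (metis sums_unique suminf_finite finite_atMost)
  then show ?thesis
    by (simp add: scoef_second_difference[OF m] c_def lessThan_Suc_atMost[symmetric])
qed

text \<open>A term of level p < j: S_{p-1} v and Delta_p w are both affine on the interval (j,m),
  so only the product of their slopes contributes.\<close>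
lemma para_low_term_bound:
  assumes p: "p < j" and m: "1 \<le> m" "m \<le> 2 ^ j"
  shows "norm (second_difference (para_term v w p) j m) \<le> 8 * V * W / 4 ^ j * (4 / b) ^ p"
proof -
  define A where "A = sS v (int p - 1)"
  define B where "B = sDelta w (int p)"
  have A_mid: "A (tt0 j m) + A (tt2 j m) = 2 *\<^sub>R A (tt1 j m)"
    unfolding A_def by (rule sS_midpoint) (use p m in auto)
  have B_mid: "B (tt0 j m) + B (tt2 j m) = 2 *\<^sub>R B (tt1 j m)"
    unfolding B_def by (rule sDelta_midpoint) (use p m in auto)
  have "para_term v w p = (\<lambda>t. blinfun_apply (A t) (B t))"
    by (simp add: fun_eq_iff para_term_def A_def B_def)
  then have sd: "second_difference (para_term v w p) j m
      = blinfun_apply (A (tt2 j m) - A (tt1 j m)) (2 *\<^sub>R (B (tt1 j m) - B (tt2 j m)))"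
    by (simp add: second_difference_apply_affine[OF A_mid B_mid])
  have "norm (A (tt2 j m) - A (tt1 j m)) \<le> 2 ^ (p + 1) * (1 / 2 ^ (j + 1)) * (4 * V)"
    unfolding A_def by (rule sS_lipschitz[OF _ m(1) v_coef_bound]) (use p in auto)
  moreover have "norm (B (tt1 j m) - B (tt2 j m)) \<le> 2 ^ (p + 1) * (1 / 2 ^ (j + 1)) * (W / b ^ p)"
    using sDelta_change_on_half_interval[OF p m(1) w_coef_bound] by (simp add: B_def norm_minus_commute)
  ultimately have "norm (second_difference (para_term v w p) j m)
      \<le> (2 ^ (p + 1) * (1 / 2 ^ (j + 1)) * (4 * V)) * (2 * (2 ^ (p + 1) * (1 / 2 ^ (j + 1)) * (W / b ^ p)))"
    unfolding sd using V_nonneg W_nonneg b_gt_1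
    by (intro order_trans[OF norm_blinfun] mult_mono) simp_all
  also have "\<dots> = 8 * V * W / 4 ^ j * (4 / b) ^ p"
    using b_gt_1 by (simp add: power_divide power_mult_distrib[symmetric] field_simps)
  finally show ?thesis .
qed

text \<open>S_{j-1} v is the linear interpolation of v on the grid of level j, so at the centre of a
  dyadic interval of level j it is an average of two values of v.\<close>
lemma sS_at_centre_bounded:
  assumes m: "1 \<le> m" "m \<le> 2 ^ j"
  shows "norm (sS v (int j - 1) (tt1 j m)) \<le> V"
proof (cases j)
  case 0
  then show ?thesis using v_bounded[of 0] by (simp add: sS_minus_1)
next
  case (Suc j')
  have "sS v (int j - 1) (tt0 j m) = v (tt0 j m)" "sS v (int j - 1) (tt2 j m) = v (tt2 j m)"
    using sS_interpolates[of "m - 1" j' v] sS_interpolates[of m j' v] m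
    by (simp_all add: Suc tt0_def tt2_def of_nat_diff)
  then have "sS v (int j - 1) (tt1 j m) = (1/2) *\<^sub>R (v (tt0 j m) + v (tt2 j m))"
    using sS_midpoint[of j j m v] m by (simp add: algebra_simps)
  then have "norm (sS v (int j - 1) (tt1 j m)) \<le> (1/2) * (norm (v (tt0 j m)) + norm (v (tt2 j m)))"
    using norm_triangle_ineq[of "v (tt0 j m)" "v (tt2 j m)"] by simp
  also have "\<dots> \<le> V" using v_bounded[OF tt_in_unit_interval(1)[OF m]] v_bounded[OF tt_in_unit_interval(3)[OF m]] by simp
  finally show ?thesis .
qed

lemma para_diagonal_term_bound:
  assumes m: "1 \<le> m" "m \<le> 2 ^ j"
  shows "norm (second_difference (para_term v w j) j m) \<le> V * (W / b ^ j)"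
proof -
  define A where "A = sS v (int j - 1)"
  define B where "B = sDelta w (int j)"
  have A_mid: "A (tt0 j m) + A (tt2 j m) = 2 *\<^sub>R A (tt1 j m)"
    unfolding A_def by (rule sS_midpoint) (use m in auto)
  have "blinfun_apply (A (tt2 j m) - A (tt1 j m)) (B (tt0 j m) - B (tt2 j m)) = 0"
  proof (cases "j = 0")
    case True
    then show ?thesis by (simp add: A_def sS_minus_1)
  next
    case False
    then have "B (tt0 j m) = 0" "B (tt2 j m) = 0"
      using sDelta_on_grid[of w j "m - 1"] sDelta_on_grid[of w j m] m
      by (simp_all add: B_def tt0_def tt2_def of_nat_diff)
    then show ?thesis by simp
  qed
  then have "second_difference (para_term v w j) j m = blinfun_apply (A (tt1 j m)) (scoef w (int j) m)"
    using second_difference_apply[OF A_mid, of B] sDelta_second_difference_own_level[OF m, of w]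
    by (simp add: para_term_def[abs_def] A_def B_def)
  also have "norm \<dots> \<le> V * (W / b ^ j)"
    using sS_at_centre_bounded[OF m] w_coef_bound[of m j] m V_nonneg
    by (intro order_trans[OF norm_blinfun] mult_mono) (simp_all add: A_def)
  finally show ?thesis .
qed

text \<open>For b < 4 the low terms form a geometric series dominated by its last term, which yields
  the decay b^(-j) of the coefficients of the paraproduct.\<close>
lemma para_scoef_decay:
  assumes b4: "b < 4" and m: "1 \<le> m" "m \<le> 2 ^ j"
  shows "b ^ j * norm (scoef (para v w) (int j) m) \<le> (1 + 8 / (4 / b - 1)) * V * W"
proof -
  define d where "d = 4 / b - 1"
  have r: "1 < 4 / b" using b4 b_gt_1 by (simp add: field_simps)
  then have d: "0 < d" by (simp add: d_def)
  have "norm (\<Sum>p<j. second_difference (para_term v w p) j m) \<le> (\<Sum>p<j. 8 * V * W / 4 ^ j * (4 / b) ^ p)"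
    by (intro order_trans[OF norm_sum] sum_mono para_low_term_bound m) simp
  also have "\<dots> \<le> 8 * V * W / 4 ^ j * ((4 / b) ^ j / d)"
    unfolding sum_distrib_left[symmetric] d_def
    using geometric_sum_le[OF r] V_nonneg W_nonneg by (intro mult_left_mono) simp_all
  also have "\<dots> = 8 * V * W / d / b ^ j"
    using b_gt_1 d by (simp add: power_divide field_simps)
  finally have "norm (scoef (para v w) (int j) m) \<le> 8 * V * W / d / b ^ j + V * (W / b ^ j)"
    unfolding para_scoef_finite_sum[OF m]
    using para_diagonal_term_bound[OF m] by (intro norm_triangle_le add_mono)
  then have "b ^ j * norm (scoef (para v w) (int j) m) \<le> b ^ j * (8 * V * W / d / b ^ j + V * (W / b ^ j))"
    using b_gt_1 by (intro mult_left_mono) simp_all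
  also have "\<dots> = (1 + 8 / d) * V * W"
    using b_gt_1 d by (simp add: field_simps)
  finally show ?thesis by (simp add: d_def)
qed

text \<open>The weighted coefficients b^p |(pi_<(v,w))_{pm}| are bounded over the whole index set;
  the indices with m = 0 are handled by the boundary values of the paraproduct.\<close>
lemma para_weighted_scoef_bound:
  assumes b4: "b < 4" and pm: "pm \<in> schauder_idx"
  shows "b powr real_of_int (fst pm) * norm (scoef (para v w) (fst pm) (snd pm)) \<le> (1 + 8 / (4 / b - 1)) * V * W"
proof -
  have C1: "1 \<le> 1 + 8 / (4 / b - 1)" using b4 b_gt_1 by (simp add: field_simps)
  then have CVW: "V * W \<le> (1 + 8 / (4 / b - 1)) * V * W"
    using V_nonneg W_nonneg mult_right_mono[OF C1, of "V * W"] by simp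
  have CVW0: "0 \<le> (1 + 8 / (4 / b - 1)) * V * W"
    using C1 V_nonneg W_nonneg by simp
  from pm consider "pm = (-1, 0)" | "pm = (0, 0)" | p where "pm = (int p, 0)" "p > 0"
    | p m where "pm = (int p, m)" "1 \<le> m" "m \<le> 2 ^ p"
    unfolding schauder_idx_def by (auto simp: Suc_le_eq) (metis gr0I)
  then show ?thesis
  proof cases
    case 2
    have "norm (blinfun_apply (v 0) (w 1 - w 0)) \<le> V * W"
      using v_bounded[of 0] w_coef_bound[of 0 0] V_nonneg
      by (intro order_trans[OF norm_blinfun] mult_mono) (simp_all add: scoef_def)
    then show ?thesis using 2 CVW b_gt_1 by (simp add: scoef_def para_at_0 para_at_1)
  next
    case (4 p m)
    then show ?thesis using para_scoef_decay[OF b4 4(2,3)] b_gt_1 by (simp add: powr_realpow)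
  qed (use CVW0 in \<open>auto simp: scoef_def para_at_0\<close>)
qed

end

theorem mainTheorem2:
  fixes \<beta> :: real
  assumes "0 < \<beta>" and "\<beta> < 2"
  shows "\<exists>C>0. \<forall>(v :: real \<Rightarrow> ((real^'d) \<Rightarrow>\<^sub>L (real^'n))) (w :: real \<Rightarrow> (real^'d)).
           continuous_on {0..1} v \<and> w \<in> holder_space \<beta> \<longrightarrow>
             uniform_limit {0..1} (\<lambda>N t. \<Sum>p<N. para_term v w p t) (para v w) sequentially \<and>
             para v w \<in> holder_space \<beta> \<and>
             holder_norm \<beta> (para v w) \<le> C * sup_norm v * holder_norm \<beta> w"
proof -
  define b where "b = 2 powr \<beta>"
  define C where "C = 1 + 8 / (4 / b - 1)"
  have b: "1 < b" "b < 4"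
    using assms powr_less_mono[of 0 \<beta> 2] powr_less_mono[of \<beta> 2 2] by (simp_all add: b_def)
  have weight: "2 powr (real_of_int p * \<beta>) = b powr real_of_int p" for p
    by (simp add: b_def powr_powr mult.commute)
  have "0 < C" using b by (simp add: C_def field_simps)
  moreover have "uniform_limit {0..1} (\<lambda>N t. \<Sum>p<N. para_term v w p t) (para v w) sequentially \<and>
      para v w \<in> holder_space \<beta> \<and> holder_norm \<beta> (para v w) \<le> C * sup_norm v * holder_norm \<beta> w"
    if "continuous_on {0..1} v" "w \<in> holder_space \<beta>"
    for v :: "real \<Rightarrow> (real^'d) \<Rightarrow>\<^sub>L (real^'n)" and w :: "real \<Rightarrow> real^'d"
  proof -
    note setting = sup_norm_upper[OF that(1)] scoef_bounded_by_holder_norm[OF that(2), folded b_def] b(1)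
    have bound: "2 powr (real_of_int (fst pm) * \<beta>) * norm (scoef (para v w) (fst pm) (snd pm))
        \<le> C * sup_norm v * holder_norm \<beta> w" if "pm \<in> schauder_idx" for pm
      unfolding weight C_def by (rule para_weighted_scoef_bound[OF setting b(2) that])
    have "schauder_idx \<noteq> {}" by (auto simp: schauder_idx_def)
    then show ?thesis
      using para_uniform_limit[OF setting] para_continuous[OF setting] bound
      unfolding holder_space_def holder_norm_def by (auto intro!: bdd_aboveI2 cSUP_least)
  qed
  ultimately show ?thesis by blast
qed

end
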